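(* Let $P=(p_1,\dots,p_n)$ be points in $\mathbb{R}^d$, $\mathcal{F}$ a constraint for $k$-CMedian, and $\mathcal{C}=\{c_1,\dots,c_k\}\subset\mathbb{R}^d$ with $\omega=\frac1n\sum_{i=1}^n\min_{c\in\mathcal{C}}\|p_i-c\|$. For each $i$ let $\tilde p_i$ be a point of $\mathcal{C}$ nearest to $p_i$, and $\tilde P=(\tilde p_1,\dots,\tilde p_n)$. If $\mu_{opt}$ and $\tilde\mu_{opt}$ denote the optimal $k$-CMedian values of $P$ and $\tilde P$ (same $\mathcal{F}$), then $\tilde\mu_{opt}\le\omega+\mu_{opt}$.
   Context: A constraint for $k$-CMedian is a nonempty family $\mathcal{F}$ of ordered partitions $(S_1,\dots,S_k)$ of $\{1,\dots,n\}$ into $k$ parts. For a sequence $X=(x_1,\dots,x_n)$ its optimal $k$-CMedian value is $\min_{(S_j)\in\mathcal{F}}\min_{c'_1,\dots,c'_k\in\mathbb{R}^d}\frac1n\sum_j\sum_{i\in S_j}\|x_i-c'_j\|$. *)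

theory Defs
  imports "HOL-Analysis.Analysis"
begin

definition ordered_partition :: "nat \<Rightarrow> nat \<Rightarrow> (nat \<Rightarrow> nat set) \<Rightarrow> bool" where
  "ordered_partition n k S \<longleftrightarrow>
     (\<Union>j\<in>{1..k}. S j) = {1..n} \<and>
     (\<forall>j\<in>{1..k}. \<forall>j'\<in>{1..k}. j \<noteq> j' \<longrightarrow> S j \<inter> S j' = {})"

definition is_constraint :: "nat \<Rightarrow> nat \<Rightarrow> (nat \<Rightarrow> nat set) set \<Rightarrow> bool" where
  "is_constraint n k F \<longleftrightarrow> F \<noteq> {} \<and> (\<forall>S\<in>F. ordered_partition n k S)"

definition cmedian_cost :: "nat \<Rightarrow> nat \<Rightarrow> (nat \<Rightarrow> 'a::euclidean_space) \<Rightarrow> (nat \<Rightarrow> nat set) \<Rightarrow> (nat \<Rightarrow> 'a) \<Rightarrow> real" where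
  "cmedian_cost n k x S c = (1 / real n) * (\<Sum>j\<in>{1..k}. \<Sum>i\<in>S j. norm (x i - c j))"

definition cmedian_opt :: "nat \<Rightarrow> nat \<Rightarrow> (nat \<Rightarrow> nat set) set \<Rightarrow> (nat \<Rightarrow> 'a::euclidean_space) \<Rightarrow> real" where
  "cmedian_opt n k F x = Inf {cmedian_cost n k x S c | S c. S \<in> F}"

end

theory Submission
  imports Defs
begin

text \<open>Moving each point \<open>p i\<close> to \<open>pt i\<close> changes the cost of every fixed partition and centre
  choice by at most the average displacement, by the triangle inequality, because the parts of a
  partition cover every index exactly once. Taking infima gives the bound, and when \<open>pt i\<close> is a
  nearest point of \<open>c ` {1..k}\<close> the average displacement is exactly \<open>\<omega>\<close>.\<close>

lemma sum_over_ordered_partition: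
  assumes "ordered_partition n k S"
  shows "(\<Sum>j\<in>{1..k}. \<Sum>i\<in>S j. f i) = (\<Sum>i\<in>{1..n}. f i)"
proof -
  have cover: "(\<Union>j\<in>{1..k}. S j) = {1..n}"
    and disjoint: "\<And>j j'. j \<in> {1..k} \<Longrightarrow> j' \<in> {1..k} \<Longrightarrow> j \<noteq> j' \<Longrightarrow> S j \<inter> S j' = {}"
    using assms unfolding ordered_partition_def by auto
  have "\<And>j. j \<in> {1..k} \<Longrightarrow> finite (S j)"
    using cover by (metis UN_upper finite_atLeastAtMost finite_subset)
  then have "(\<Sum>i\<in>(\<Union>j\<in>{1..k}. S j). f i) = (\<Sum>j\<in>{1..k}. \<Sum>i\<in>S j. f i)"
    using disjoint by (intro sum.UNION_disjoint) auto
  then show ?thesis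
    by (simp only: cover)
qed

lemma cmedian_cost_nonneg: "cmedian_cost n k x S c \<ge> 0"
  unfolding cmedian_cost_def by (intro mult_nonneg_nonneg sum_nonneg) auto

lemma cmedian_cost_le_displacement_plus:
  assumes "ordered_partition n k S"
  shows "cmedian_cost n k q S c
           \<le> (1 / real n) * (\<Sum>i\<in>{1..n}. norm (p i - q i)) + cmedian_cost n k p S c"
proof -
  have "(\<Sum>j\<in>{1..k}. \<Sum>i\<in>S j. norm (q i - c j))
          \<le> (\<Sum>j\<in>{1..k}. \<Sum>i\<in>S j. norm (p i - q i) + norm (p i - c j))"
    using norm_triangle_ineq[of "q i - p i" "p i - c j" for i j]
    by (intro sum_mono) (simp add: norm_minus_commute)
  also have "\<dots> = (\<Sum>i\<in>{1..n}. norm (p i - q i)) + (\<Sum>j\<in>{1..k}. \<Sum>i\<in>S j. norm (p i - c j))"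
    by (simp only: sum.distrib sum_over_ordered_partition[OF assms])
  finally show ?thesis
    unfolding cmedian_cost_def distrib_left[symmetric] by (intro mult_left_mono) auto
qed

lemma cmedian_opt_le_displacement_plus:
  assumes "is_constraint n k F"
  shows "cmedian_opt n k F q \<le> (1 / real n) * (\<Sum>i\<in>{1..n}. norm (p i - q i)) + cmedian_opt n k F p"
proof -
  let ?\<delta> = "(1 / real n) * (\<Sum>i\<in>{1..n}. norm (p i - q i))"
  let ?costs_q = "{cmedian_cost n k q S c | S c. S \<in> F}"
  have "?costs_q \<noteq> {}" and partition: "\<And>S. S \<in> F \<Longrightarrow> ordered_partition n k S"
    using assms unfolding is_constraint_def by auto
  have "bdd_below ?costs_q"
    by (rule bdd_belowI[of _ 0]) (auto simp: cmedian_cost_nonneg)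
  have "Inf ?costs_q - ?\<delta> \<le> Inf {cmedian_cost n k p S c | S c. S \<in> F}"
  proof (rule cInf_greatest)
    show "{cmedian_cost n k p S c | S c. S \<in> F} \<noteq> {}"
      using \<open>?costs_q \<noteq> {}\<close> by blast
  next
    fix b assume "b \<in> {cmedian_cost n k p S c | S c. S \<in> F}"
    then obtain S c where "S \<in> F" and b: "b = cmedian_cost n k p S c" by blast
    then have "Inf ?costs_q \<le> cmedian_cost n k q S c"
      using \<open>bdd_below ?costs_q\<close> by (intro cInf_lower) auto
    then show "Inf ?costs_q - ?\<delta> \<le> b"
      using cmedian_cost_le_displacement_plus[OF partition[OF \<open>S \<in> F\<close>], of q c p] b by simp
  qed
  then show ?thesis
    unfolding cmedian_opt_def by simp
qed

lemma Min_norm_diff_nearest: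
  assumes "finite A" and "y \<in> A" and "\<And>z. z \<in> A \<Longrightarrow> norm (x - y) \<le> norm (x - z)"
  shows "Min ((\<lambda>z. norm (x - z)) ` A) = norm (x - y)"
  using assms by (intro Min_eqI) auto

theorem lemma12:
  fixes p pt c :: "nat \<Rightarrow> 'a::euclidean_space"
    and n k :: nat and F :: "(nat \<Rightarrow> nat set) set" and \<omega> :: real
  assumes "n \<ge> 1" and "k \<ge> 1"
    and "is_constraint n k F"
    and "\<omega> = (1 / real n) * (\<Sum>i\<in>{1..n}. Min ((\<lambda>y. norm (p i - y)) ` (c ` {1..k})))"
    and "\<And>i. i \<in> {1..n} \<Longrightarrow> pt i \<in> c ` {1..k}"
    and "\<And>i y. i \<in> {1..n} \<Longrightarrow> y \<in> c ` {1..k} \<Longrightarrow> norm (p i - pt i) \<le> norm (p i - y)"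
  shows "cmedian_opt n k F pt \<le> \<omega> + cmedian_opt n k F p"
proof -
  have "\<And>i. i \<in> {1..n} \<Longrightarrow> Min ((\<lambda>y. norm (p i - y)) ` (c ` {1..k})) = norm (p i - pt i)"
    using assms(5,6) by (intro Min_norm_diff_nearest) auto
  then have "\<omega> = (1 / real n) * (\<Sum>i\<in>{1..n}. norm (p i - pt i))"
    using assms(4) by simp
  then show ?thesis
    using cmedian_opt_le_displacement_plus[OF assms(3)] by simp
qed

end
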